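(* (i) Let $(D, \{ \prec_\alpha, \succ_\alpha \}_{\alpha \in \Omega}, \odot)$ be a tridendriform family algebra. Then $(D, \{ \prec_\alpha, \succ_\alpha, \curlyvee_{\alpha, \beta} \}_{\alpha, \beta \in \Omega})$ with $x \curlyvee_{\alpha, \beta} y = x \odot y$ for all $\alpha,\beta$ is an NS-family algebra. (ii) Let $A$ be an associative algebra and $\{ R_\alpha : A \to A \}_{\alpha \in \Omega}$ a Rota-Baxter family of weight $\lambda\in\mathbf{k}$. Then $(A, \{ \prec_\alpha, \succ_\alpha, \curlyvee_{\alpha, \beta} \}_{\alpha, \beta \in \Omega})$ is an NS-family algebra, where $a \prec_\alpha b = a \cdot R_\alpha (b)$, $a \succ_\alpha b = R_\alpha (a) \cdot b$ and $a \curlyvee_{\alpha, \beta} b = \lambda a \cdot b$.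
   Context: $\Omega$ is a semigroup. A tridendriform family algebra is a vector space $D$ with bilinear maps $\{\prec_\alpha,\succ_\alpha\}_{\alpha\in\Omega}$ and $\odot$ satisfying, for all $x,y,z$, $\alpha,\beta$: $( x \prec_\alpha y) \prec_\beta z = x \prec_{\alpha \beta} (y \prec_\beta z + y \succ_\alpha z + y \odot z)$; $(x \succ_\alpha y) \prec_\beta z = x \succ_\alpha (y \prec_\beta z)$; $(x \prec_\beta y + x \succ_\alpha y + x \odot y) \succ_{\alpha \beta} z = x \succ_\alpha (y \succ_\beta z)$; $(x \succ_\alpha y) \odot z = x \succ_\alpha (y \odot z)$; $(x \prec_\alpha y) \odot z = x \odot (y \succ_\alpha z)$; $(x \odot y) \prec_\alpha z = x \odot (y \prec_\alpha z)$; $(x \odot y) \odot z = x \odot (y \odot z)$. A Rota-Baxter family of weight $\lambda$: linear maps $R_\alpha$ with $R_\alpha (a) \cdot R_\beta (b) = R_{\alpha \beta} ( R_\alpha (a) \cdot b + a \cdot R_\beta (b) + \lambda a \cdot b )$. An NS-family algebra is a vector space $D$ with bilinear maps $\{ \prec_\alpha, \succ_\alpha, \curlyvee_{\alpha, \beta}\}_{\alpha, \beta \in \Omega}$ such that for all $x,y,z$, $\alpha,\beta,\gamma$: (1) $(x \prec_\alpha y) \prec_\beta z = x \prec_{\alpha \beta} ( y \prec_\beta z + y \succ_\alpha z + y \curlyvee_{\alpha, \beta} z)$; (2) $(x \succ_\alpha y) \prec_\beta z = x \succ_\alpha (y \prec_\beta z)$; (3) $(x \prec_\beta y + x \succ_\alpha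 y + x \curlyvee_{\alpha, \beta} y) \succ_{\alpha \beta} z = x \succ_\alpha (y \succ_\beta z)$; (4) $( x \prec_\beta y + x \succ_\alpha y + x \curlyvee_{\alpha, \beta} y ) \curlyvee_{\alpha \beta, \gamma} z + (x \curlyvee_{\alpha, \beta} y) \prec_\gamma z = x \succ_\alpha (y \curlyvee_{\beta, \gamma} z) + x \curlyvee_{\alpha, \beta \gamma} ( y \prec_\gamma z + y \succ_\beta z + y \curlyvee_{\beta, \gamma} z )$. *)

theory Defs
  imports Main "HOL.Vector_Spaces"
begin

definition bilinear_op :: "('k::field \<Rightarrow> 'v::ab_group_add \<Rightarrow> 'v) \<Rightarrow> ('v \<Rightarrow> 'v \<Rightarrow> 'v) \<Rightarrow> bool" where
  "bilinear_op s f \<longleftrightarrow> (\<forall>x. Vector_Spaces.linear s s (f x)) \<and> (\<forall>y. Vector_Spaces.linear s s (\<lambda>x. f x y))"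

definition tridendriform_family ::
  "('k::field \<Rightarrow> 'v::ab_group_add \<Rightarrow> 'v) \<Rightarrow> ('o::semigroup_mult \<Rightarrow> 'v \<Rightarrow> 'v \<Rightarrow> 'v)
   \<Rightarrow> ('o \<Rightarrow> 'v \<Rightarrow> 'v \<Rightarrow> 'v) \<Rightarrow> ('v \<Rightarrow> 'v \<Rightarrow> 'v) \<Rightarrow> bool" where
  "tridendriform_family s lp rp dot \<longleftrightarrow>
     vector_space s \<and> (\<forall>\<alpha>. bilinear_op s (lp \<alpha>)) \<and> (\<forall>\<alpha>. bilinear_op s (rp \<alpha>)) \<and> bilinear_op s dot \<and>
     (\<forall>x y z \<alpha> \<beta>.
        lp \<beta> (lp \<alpha> x y) z = lp (\<alpha> * \<beta>) x (lp \<beta> y z + rp \<alpha> y z + dot y z) \<and>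
        lp \<beta> (rp \<alpha> x y) z = rp \<alpha> x (lp \<beta> y z) \<and>
        rp (\<alpha> * \<beta>) (lp \<beta> x y + rp \<alpha> x y + dot x y) z = rp \<alpha> x (rp \<beta> y z) \<and>
        dot (rp \<alpha> x y) z = rp \<alpha> x (dot y z) \<and>
        dot (lp \<alpha> x y) z = dot x (rp \<alpha> y z) \<and>
        lp \<alpha> (dot x y) z = dot x (lp \<alpha> y z) \<and>
        dot (dot x y) z = dot x (dot y z))"

definition NS_family ::
  "('k::field \<Rightarrow> 'v::ab_group_add \<Rightarrow> 'v) \<Rightarrow> ('o::semigroup_mult \<Rightarrow> 'v \<Rightarrow> 'v \<Rightarrow> 'v)
   \<Rightarrow> ('o \<Rightarrow> 'v \<Rightarrow> 'v \<Rightarrow> 'v) \<Rightarrow> ('o \<Rightarrow> 'o \<Rightarrow> 'v \<Rightarrow> 'v \<Rightarrow> 'v) \<Rightarrow> bool" where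
  "NS_family s lp rp vee \<longleftrightarrow>
     vector_space s \<and> (\<forall>\<alpha>. bilinear_op s (lp \<alpha>)) \<and> (\<forall>\<alpha>. bilinear_op s (rp \<alpha>)) \<and>
     (\<forall>\<alpha> \<beta>. bilinear_op s (vee \<alpha> \<beta>)) \<and>
     (\<forall>x y z \<alpha> \<beta> \<gamma>.
        lp \<beta> (lp \<alpha> x y) z = lp (\<alpha> * \<beta>) x (lp \<beta> y z + rp \<alpha> y z + vee \<alpha> \<beta> y z) \<and>
        lp \<beta> (rp \<alpha> x y) z = rp \<alpha> x (lp \<beta> y z) \<and>
        rp (\<alpha> * \<beta>) (lp \<beta> x y + rp \<alpha> x y + vee \<alpha> \<beta> x y) z = rp \<alpha> x (rp \<beta> y z) \<and>
        vee (\<alpha> * \<beta>) \<gamma> (lp \<beta> x y + rp \<alpha> x y + vee \<alpha> \<beta> x y) z + lp \<gamma> (vee \<alpha> \<beta> x y) z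
          = rp \<alpha> x (vee \<beta> \<gamma> y z) + vee \<alpha> (\<beta> * \<gamma>) x (lp \<gamma> y z + rp \<beta> y z + vee \<beta> \<gamma> y z))"

definition assoc_algebra :: "('k::field \<Rightarrow> 'a::ring \<Rightarrow> 'a) \<Rightarrow> bool" where
  "assoc_algebra s \<longleftrightarrow> vector_space s \<and> bilinear_op s (\<lambda>a b. a * b)"

definition rota_baxter_family ::
  "('k::field \<Rightarrow> 'a::ring \<Rightarrow> 'a) \<Rightarrow> ('o::semigroup_mult \<Rightarrow> 'a \<Rightarrow> 'a) \<Rightarrow> 'k \<Rightarrow> bool" where
  "rota_baxter_family s R lam \<longleftrightarrow>
     (\<forall>\<alpha>. Vector_Spaces.linear s s (R \<alpha>)) \<and>
     (\<forall>\<alpha> \<beta> a b. R \<alpha> a * R \<beta> b = R (\<alpha> * \<beta>) (R \<alpha> a * b + a * R \<beta> b + s lam (a * b)))"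

end

theory Submission
  imports Defs
begin

lemma bilinear_opD:
  assumes "bilinear_op s f"
  shows "f (a + b) c = f a c + f b c" and "f c (a + b) = f c a + f c b"
    and "f (s k a) c = s k (f a c)" and "f c (s k a) = s k (f c a)"
  using assms unfolding bilinear_op_def linear_iff by auto

lemma bilinear_op_compose_left:
  assumes "bilinear_op s f" and "Vector_Spaces.linear s s g"
  shows "bilinear_op s (\<lambda>x y. f (g x) y)"
  using assms Vector_Spaces.linear_compose[of s s g s "\<lambda>x. f x _"]
  unfolding bilinear_op_def by (simp add: comp_def)

lemma bilinear_op_compose_right:
  assumes "bilinear_op s f" and "Vector_Spaces.linear s s g"
  shows "bilinear_op s (\<lambda>x y. f x (g y))"
  using assms Vector_Spaces.linear_compose[of s s g s "f _"]
  unfolding bilinear_op_def by (simp add: comp_def)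

lemma bilinear_op_scale:
  assumes "bilinear_op s f"
  shows "bilinear_op s (\<lambda>x y. s c (f x y))"
proof -
  have "vector_space s"
    using assms unfolding bilinear_op_def linear_iff by blast
  then have "Vector_Spaces.linear s s (s c)"
    by (rule vector_space.linear_scale_self)
  then show ?thesis
    using assms Vector_Spaces.linear_compose[of s s _ s "s c"]
    unfolding bilinear_op_def by (simp add: comp_def)
qed

lemma NS_family_of_tridendriform_family:
  assumes "tridendriform_family s lp rp dot"
  shows "NS_family s lp rp (\<lambda>\<alpha> \<beta>. dot)"
proof -
  have "bilinear_op s dot"
    using assms unfolding tridendriform_family_def by blast
  note dot_add = bilinear_opD(1,2)[OF this]
  \<comment> \<open>Expanded by additivity of \<open>\<odot>\<close>, the fourth NS axiom is the sum of the last four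
    tridendriform axioms.\<close>
  show ?thesis
    using assms unfolding tridendriform_family_def NS_family_def
    by (auto simp: dot_add algebra_simps)
qed

lemma NS_family_of_rota_baxter_family:
  fixes t :: "'k::field \<Rightarrow> 'a::ring \<Rightarrow> 'a" and R :: "'o::semigroup_mult \<Rightarrow> 'a \<Rightarrow> 'a"
  assumes "assoc_algebra t" and "rota_baxter_family t R lam"
  shows "NS_family t (\<lambda>\<alpha> a b. a * R \<alpha> b) (\<lambda>\<alpha> a b. R \<alpha> a * b) (\<lambda>\<alpha> \<beta> a b. t lam (a * b))"
proof -
  have vs: "vector_space t" and mult: "bilinear_op t (*)"
    using assms(1) unfolding assoc_algebra_def by auto
  have R_linear: "Vector_Spaces.linear t t (R \<alpha>)" for \<alpha>
    using assms(2) unfolding rota_baxter_family_def by blast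
  have rota_baxter:
    "R \<alpha> a * R \<beta> b = R (\<alpha> * \<beta>) (R \<alpha> a * b + a * R \<beta> b + t lam (a * b))" for \<alpha> \<beta> a b
    using assms(2) unfolding rota_baxter_family_def by blast
  have scale_add: "t k (a + b) = t k a + t k b" for k a b
    using vs unfolding vector_space_def module_def by blast
  have scale_mult: "t k a * b = t k (a * b)" "a * t k b = t k (a * b)" for k a b
    using bilinear_opD(3,4)[OF mult] by metis+
  show ?thesis
    unfolding NS_family_def
  proof (intro conjI vs allI)
    fix x y z :: 'a and \<alpha> \<beta> \<gamma> :: 'o
    show "bilinear_op t (\<lambda>a b. a * R \<alpha> b)"
      using mult R_linear by (rule bilinear_op_compose_right)
    show "bilinear_op t (\<lambda>a b. R \<alpha> a * b)"
      using mult R_linear by (rule bilinear_op_compose_left)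
    show "bilinear_op t (\<lambda>a b. t lam (a * b))"
      using mult by (rule bilinear_op_scale)
    show "x * R \<alpha> y * R \<beta> z = x * R (\<alpha> * \<beta>) (y * R \<beta> z + R \<alpha> y * z + t lam (y * z))"
      by (simp add: mult.assoc rota_baxter add.commute)
    show "R \<alpha> x * y * R \<beta> z = R \<alpha> x * (y * R \<beta> z)"
      by (simp add: mult.assoc)
    show "R (\<alpha> * \<beta>) (x * R \<beta> y + R \<alpha> x * y + t lam (x * y)) * z = R \<alpha> x * (R \<beta> y * z)"
      by (simp add: mult.assoc[symmetric] rota_baxter add.commute)
    \<comment> \<open>With the scalars pulled out, both sides of the fourth axiom are \<open>\<lambda>\<close> times the same
      four products.\<close>
    show "t lam ((x * R \<beta> y + R \<alpha> x * y + t lam (x * y)) * z) + t lam (x * y) * R \<gamma> z =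
          R \<alpha> x * t lam (y * z) + t lam (x * (y * R \<gamma> z + R \<beta> y * z + t lam (y * z)))"
      by (simp add: scale_add scale_mult mult.assoc algebra_simps)
  qed
qed

theorem proposition3p16:
  fixes s :: "'k::field \<Rightarrow> 'v::ab_group_add \<Rightarrow> 'v"
    and lp rp :: "'o::semigroup_mult \<Rightarrow> 'v \<Rightarrow> 'v \<Rightarrow> 'v"
    and dot :: "'v \<Rightarrow> 'v \<Rightarrow> 'v"
    and t :: "'k \<Rightarrow> 'a::ring \<Rightarrow> 'a"
    and R :: "'o \<Rightarrow> 'a \<Rightarrow> 'a"
    and lam :: 'k
  shows "(tridendriform_family s lp rp dot \<longrightarrow> NS_family s lp rp (\<lambda>\<alpha> \<beta>. dot)) \<and>
         (assoc_algebra t \<and> rota_baxter_family t R lam \<longrightarrow>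
           NS_family t (\<lambda>\<alpha> a b. a * R \<alpha> b) (\<lambda>\<alpha> a b. R \<alpha> a * b) (\<lambda>\<alpha> \<beta> a b. t lam (a * b)))"
  using NS_family_of_tridendriform_family NS_family_of_rota_baxter_family by blast

end
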